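(* Let $G=A*_C B$ with $|A/C|\ge2$, $|B/C|\ge2$ and generating set $S=(A\cup B)\setminus\{1\}$. Let $w$ be a nonempty word such that $w^2$ is reduced. Then for every $g\in G$ there is a geodesic word $u$ with $\bar u=g$ that realizes $c_w$ at $g$, i.e. $|u|-|u|_w=\min\{|v|-|v|_w : \bar v=g\}$.
   Context: Words are finite sequences of letters in $S$; $\bar u$ is the element represented, $|u|$ the length, $|g|$ the word length of $g$; a geodesic word is one with $|u|=|\bar u|$. A word $x_1\cdots x_n$ is reduced if $n=1$ or its letters alternately lie in $A\setminus C$ and $B\setminus C$. For a nonempty word $w$ and a word $u$, $|u|_w$ is the maximal number of pairwise non-overlapping occurrences of $w$ as a contiguous subword of $u$, and $c_w(g)=|g|-\min\{|v|-|v|_w:\bar v=g\}$. *)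

theory Defs
  imports "HOL-Algebra.Algebra"
begin

definition word_eval :: "('a, 'b) monoid_scheme \<Rightarrow> 'a list \<Rightarrow> 'a" where
  "word_eval G u = foldr (\<lambda>x y. x \<otimes>\<^bsub>G\<^esub> y) u \<one>\<^bsub>G\<^esub>"

definition alternating :: "'a set \<Rightarrow> 'a set \<Rightarrow> 'a set \<Rightarrow> 'a list \<Rightarrow> bool" where
  "alternating A B C xs \<longleftrightarrow>
     (\<forall>i<length xs. xs ! i \<in> (A - C) \<union> (B - C)) \<and>
     (\<forall>i. Suc i < length xs \<longrightarrow>
        \<not> (xs ! i \<in> A - C \<and> xs ! Suc i \<in> A - C) \<and>
        \<not> (xs ! i \<in> B - C \<and> xs ! Suc i \<in> B - C))"

definition reduced_word :: "'a set \<Rightarrow> 'a set \<Rightarrow> 'a set \<Rightarrow> 'a list \<Rightarrow> bool" where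
  "reduced_word A B C xs \<longleftrightarrow> length xs = 1 \<or> (xs \<noteq> [] \<and> alternating A B C xs)"

text \<open>G is the (internal) amalgamated free product A *_C B: A, B subgroups with
  A \<inter> B = C, A \<union> B generates G, and every nonempty alternating product is
  nontrivial (normal form theorem characterisation).\<close>
definition amalgamated_product ::
  "('a, 'b) monoid_scheme \<Rightarrow> 'a set \<Rightarrow> 'a set \<Rightarrow> 'a set \<Rightarrow> bool" where
  "amalgamated_product G A B C \<longleftrightarrow>
     group G \<and> subgroup A G \<and> subgroup B G \<and> A \<inter> B = C \<and>
     generate G (A \<union> B) = carrier G \<and>
     (\<forall>xs. xs \<noteq> [] \<and> alternating A B C xs \<longrightarrow> word_eval G xs \<noteq> \<one>\<^bsub>G\<^esub>)"

definition word_length :: "('a, 'b) monoid_scheme \<Rightarrow> 'a set \<Rightarrow> 'a \<Rightarrow> nat" where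
  "word_length G S g = (LEAST n. \<exists>v. set v \<subseteq> S \<and> length v = n \<and> word_eval G v = g)"

definition geodesic :: "('a, 'b) monoid_scheme \<Rightarrow> 'a set \<Rightarrow> 'a list \<Rightarrow> bool" where
  "geodesic G S u \<longleftrightarrow> set u \<subseteq> S \<and> length u = word_length G S (word_eval G u)"

definition occ_positions :: "'a list \<Rightarrow> 'a list \<Rightarrow> nat set" where
  "occ_positions w u = {i. i + length w \<le> length u \<and> take (length w) (drop i u) = w}"

definition occ_count :: "'a list \<Rightarrow> 'a list \<Rightarrow> nat" where
  "occ_count w u = Max {card P | P. P \<subseteq> occ_positions w u \<and>
       (\<forall>i\<in>P. \<forall>j\<in>P. i < j \<longrightarrow> i + length w \<le> j)}"

end

(*
  Merging two adjacent letters that lie in a common factor shortens a word by at least one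
  letter.  It also destroys at most one occurrence of w in a maximal non-overlapping family:
  two occurrences meeting the merged pair would have to end at its first and start at its
  second letter, so the pair would be (last w, hd w); these letters lie in different factors
  because w^2 is reduced.  Hence |v| - |v|_w never increases along such merges, and merging
  until no two adjacent letters share a factor ends in an alternating word or a single letter.
  By the normal form theorem all such words representing the same element have the same
  length, so they are geodesic.  Merging a word that minimises |v| - |v|_w then gives u.
*)
theory Submission
  imports Defs
begin

definition alternating_pair :: "'a set \<Rightarrow> 'a set \<Rightarrow> 'a set \<Rightarrow> 'a \<Rightarrow> 'a \<Rightarrow> bool" where
  "alternating_pair A B C x y \<longleftrightarrow>
     \<not> (x \<in> A - C \<and> y \<in> A - C) \<and> \<not> (x \<in> B - C \<and> y \<in> B - C)"

definition letter_type :: "'a set \<Rightarrow> 'a set \<Rightarrow> 'a set \<Rightarrow> 'a \<Rightarrow> bool \<times> bool" where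
  "letter_type A B C x = (x \<in> A - C, x \<in> B - C)"

lemma alternating_iff_successively:
  "alternating A B C xs \<longleftrightarrow>
     set xs \<subseteq> (A - C) \<union> (B - C) \<and> successively (alternating_pair A B C) xs"
  unfolding alternating_def successively_conv_nth alternating_pair_def subset_code(1)
    all_set_conv_all_nth by blast

lemma alternating_append:
  "alternating A B C (xs @ ys) \<longleftrightarrow> alternating A B C xs \<and> alternating A B C ys \<and>
     (xs = [] \<or> ys = [] \<or> alternating_pair A B C (last xs) (hd ys))"
  by (auto simp: alternating_iff_successively successively_append_iff)

lemma alternating_rev [simp]: "alternating A B C (rev xs) \<longleftrightarrow> alternating A B C xs"
proof -
  have "successively (\<lambda>x y. alternating_pair A B C y x) xs \<longleftrightarrow>
      successively (alternating_pair A B C) xs"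
    by (rule successively_cong) (auto simp: alternating_pair_def)
  then show ?thesis by (simp add: alternating_iff_successively)
qed

lemma alternating_letter_type_cong:
  assumes "map (letter_type A B C) xs = map (letter_type A B C) ys"
  shows "alternating A B C xs \<longleftrightarrow> alternating A B C ys"
proof -
  let ?P = "\<lambda>s t. \<not> (fst s \<and> fst t) \<and> \<not> (snd s \<and> snd t)"
  have pair: "alternating_pair A B C x y \<longleftrightarrow> ?P (letter_type A B C x) (letter_type A B C y)"
    for x y by (auto simp: alternating_pair_def letter_type_def)
  have in_factors: "set zs \<subseteq> (A - C) \<union> (B - C) \<longleftrightarrow>
      (\<forall>t\<in>set (map (letter_type A B C) zs). t \<noteq> (False, False))" for zs
    by (auto simp: letter_type_def)
  have char: "alternating A B C zs \<longleftrightarrow>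
      (\<forall>t\<in>set (map (letter_type A B C) zs). t \<noteq> (False, False)) \<and>
      successively ?P (map (letter_type A B C) zs)" for zs
    unfolding alternating_iff_successively in_factors successively_map pair ..
  show ?thesis
    by (simp only: char assms)
qed

lemma alternating_pair_commute: "alternating_pair A B C x y \<longleftrightarrow> alternating_pair A B C y x"
  by (auto simp: alternating_pair_def)

lemma alternating_pair_letter_type_cong:
  "letter_type A B C x = letter_type A B C x' \<Longrightarrow> letter_type A B C y = letter_type A B C y' \<Longrightarrow>
    alternating_pair A B C x y \<longleftrightarrow> alternating_pair A B C x' y'"
  by (simp add: letter_type_def alternating_pair_def)

lemma letter_type_eq_if_same_factor:
  "A \<inter> B = C \<Longrightarrow> H = A \<or> H = B \<Longrightarrow> x \<in> H - C \<Longrightarrow> y \<in> H - C \<Longrightarrow>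
    letter_type A B C x = letter_type A B C y"
  by (auto simp: letter_type_def)

definition shares_factor :: "'a set \<Rightarrow> 'a set \<Rightarrow> 'a \<Rightarrow> 'a \<Rightarrow> bool" where
  "shares_factor A B x y \<longleftrightarrow> (x \<in> A \<and> y \<in> A) \<or> (x \<in> B \<and> y \<in> B)"

lemma not_successively_split:
  "\<not> successively P xs \<Longrightarrow> \<exists>ys x y zs. xs = ys @ [x, y] @ zs \<and> \<not> P x y"
proof (induction xs rule: induct_list012)
  case (3 x y zs)
  show ?case
  proof (cases "P x y")
    case True
    then obtain ys x' y' zs' where "y # zs = ys @ [x', y'] @ zs'" "\<not> P x' y'"
      using "3.IH"(2) "3.prems" by auto
    then show ?thesis
      by (metis append_Cons)
  next
    case False
    then show ?thesis
      by (metis append_Cons append_Nil)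
  qed
qed auto

lemma alternating_if_no_shared_factor:
  assumes "A \<inter> B = C"
  shows "successively (\<lambda>x y. \<not> shares_factor A B x y) xs \<Longrightarrow> set xs \<subseteq> A \<union> B \<Longrightarrow>
    alternating A B C xs \<or> length xs \<le> 1"
proof (induction xs rule: induct_list012)
  case (3 x y zs)
  have xy: "x \<in> (A - C) \<union> (B - C)" "y \<in> (A - C) \<union> (B - C)" "alternating_pair A B C x y"
    using "3.prems" assms by (auto simp: shares_factor_def alternating_pair_def)
  have "alternating A B C (y # zs)"
    using "3.IH"(2) "3.prems" xy by (cases zs) (auto simp: alternating_iff_successively)
  then show ?case
    using xy by (simp add: alternating_iff_successively)
qed auto

lemma not_junction_if_shares_factor:
  assumes "w \<noteq> []" "alternating A B C (w @ w)" "shares_factor A B x y"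
  shows "\<not> (x = last w \<and> y = hd w)"
proof -
  have w: "alternating A B C w" and junction: "alternating_pair A B C (last w) (hd w)"
    using assms(1,2) by (simp_all add: alternating_append)
  from w have "set w \<subseteq> (A - C) \<union> (B - C)"
    by (simp add: alternating_iff_successively)
  then have "last w \<in> (A - C) \<union> (B - C)" "hd w \<in> (A - C) \<union> (B - C)"
    using assms(1) by (meson hd_in_set last_in_set subsetD)+
  with junction show ?thesis
    using assms(3) by (auto simp: alternating_pair_def shares_factor_def)
qed

definition occ_packing :: "'a list \<Rightarrow> 'a list \<Rightarrow> nat set \<Rightarrow> bool" where
  "occ_packing w u P \<longleftrightarrow>
     P \<subseteq> occ_positions w u \<and> (\<forall>i\<in>P. \<forall>j\<in>P. i < j \<longrightarrow> i + length w \<le> j)"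

lemma occ_count_eq_Max: "occ_count w u = Max {card P | P. occ_packing w u P}"
  by (simp add: occ_count_def occ_packing_def)

lemma occ_packing_subset: "occ_packing w u P \<Longrightarrow> Q \<subseteq> P \<Longrightarrow> occ_packing w u Q"
  unfolding occ_packing_def by blast

lemma occ_packing_atMost: "occ_packing w u P \<Longrightarrow> P \<subseteq> {..length u}"
  unfolding occ_packing_def occ_positions_def by auto

lemma occ_packing_finite: "occ_packing w u P \<Longrightarrow> finite P"
  by (rule finite_subset[OF occ_packing_atMost]) simp_all

lemma finite_occ_packing_cards: "finite {card P | P. occ_packing w u P}"
proof (rule finite_subset)
  show "{card P | P. occ_packing w u P} \<subseteq> {..Suc (length u)}"
    using card_mono[OF finite_atMost occ_packing_atMost] by fastforce
qed simp

lemma card_le_occ_count: "occ_packing w u P \<Longrightarrow> card P \<le> occ_count w u"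
  unfolding occ_count_eq_Max using finite_occ_packing_cards by (rule Max_ge) blast

lemma occ_count_attained: "\<exists>P. occ_packing w u P \<and> card P = occ_count w u"
proof -
  have "occ_packing w u {}" by (simp add: occ_packing_def)
  then have "occ_count w u \<in> {card P | P. occ_packing w u P}"
    unfolding occ_count_eq_Max using finite_occ_packing_cards by (intro Max_in) blast+
  then obtain P where "occ_packing w u P" "occ_count w u = card P"
    by blast
  then show ?thesis
    by auto
qed

lemma occ_positions_nth:
  assumes "j \<in> occ_positions w u" "k < length w"
  shows "u ! (j + k) = w ! k"
proof -
  have "take (length w) (drop j u) = w" "j + length w \<le> length u"
    using assms(1) by (auto simp: occ_positions_def)
  then show ?thesis using assms(2) by (metis add_leD1 nth_drop nth_take)
qed

lemma occ_positions_append_prefix: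
  assumes "j + length w \<le> length p" "j \<in> occ_positions w (p @ s)"
  shows "j \<in> occ_positions w (p @ s')"
proof -
  have "take (length w) (drop j (p @ s')) = take (length w) (drop j p)"
    using assms(1) by simp
  also have "\<dots> = take (length w) (drop j (p @ s))"
    using assms(1) by simp
  also have "\<dots> = w"
    using assms(2) by (simp add: occ_positions_def)
  finally have "take (length w) (drop j (p @ s')) = w" .
  moreover have "j + length w \<le> length (p @ s')"
    using assms(1) by simp
  ultimately show ?thesis
    by (simp only: occ_positions_def mem_Collect_eq)
qed

lemma occ_positions_append_suffix:
  assumes "length p \<le> j" "j \<in> occ_positions w (p @ s)"
  shows "j - length p + length p' \<in> occ_positions w (p' @ s)"
proof -
  obtain k where j: "j = length p + k"
    using assms(1) le_Suc_ex by blast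
  then have "drop (j - length p + length p') (p' @ s) = drop j (p @ s)"
    and "j - length p + length p' + length w \<le> length (p' @ s)"
    using assms(2) by (simp_all add: occ_positions_def)
  then show ?thesis
    using assms(2) by (simp only: occ_positions_def mem_Collect_eq)
qed

lemma card_occ_packing_avoiding_le:
  assumes "w \<noteq> []" and packing: "occ_packing w (p @ r @ q) P"
    and avoiding: "\<forall>j\<in>P. j + length w \<le> length p \<or> length (p @ r) \<le> j"
  shows "card P \<le> occ_count w (p @ r' @ q)"
proof -
  define f where
    "f j = (if j + length w \<le> length p then j else j - length (p @ r) + length (p @ r'))" for j
  have gap: "f i + length w \<le> f j" if "i \<in> P" "j \<in> P" "i < j" for i j
  proof -
    have "i + length w \<le> j"
      using packing that by (auto simp: occ_packing_def)
    moreover have "i + length w \<le> length p \<or> length (p @ r) \<le> i"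
      "j + length w \<le> length p \<or> length (p @ r) \<le> j"
      using avoiding that by auto
    ultimately show ?thesis
      unfolding f_def by auto
  qed
  have mono: "strict_mono_on P f"
  proof (rule strict_mono_onI)
    show "f i < f j" if "i \<in> P" "j \<in> P" "i < j" for i j
      using gap[OF that] \<open>w \<noteq> []\<close> by (simp add: less_le_trans[of _ "f i + length w"])
  qed
  have "f j \<in> occ_positions w (p @ r' @ q)" if "j \<in> P" for j
  proof -
    have occ: "j \<in> occ_positions w (p @ r @ q)"
      using packing that by (auto simp: occ_packing_def)
    show ?thesis
    proof (cases "j + length w \<le> length p")
      case True
      then show ?thesis
        using occ_positions_append_prefix[OF True occ] by (simp add: f_def)
    next
      case False
      then have "length (p @ r) \<le> j"
        using avoiding that by blast
      then show ?thesis
        using occ_positions_append_suffix[of "p @ r" j w q "p @ r'"] occ False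
        by (simp add: f_def)
    qed
  qed
  moreover have "f i + length w \<le> f j" if "i \<in> P" "j \<in> P" "f i < f j" for i j
    using gap that strict_mono_on_less[OF mono] by blast
  ultimately have "occ_packing w (p @ r' @ q) (f ` P)"
    unfolding occ_packing_def by blast
  then have "card (f ` P) \<le> occ_count w (p @ r' @ q)"
    by (rule card_le_occ_count)
  then show ?thesis
    using card_image[OF strict_mono_on_imp_inj_on[OF mono]] by simp
qed

lemma card_occ_packing_meeting_pair_le:
  assumes "w \<noteq> []" and packing: "occ_packing w (p @ [x, y] @ q) P"
    and not_junction: "\<not> (x = last w \<and> y = hd w)"
  shows "card {j\<in>P. \<not> (j + length w \<le> length p \<or> length p + 2 \<le> j)} \<le> 1"
    (is "card ?M \<le> 1")
proof -
  have False if "i \<in> ?M" "j \<in> ?M" "i < j" for i j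
  proof -
    have occ: "i \<in> occ_positions w (p @ [x, y] @ q)" "j \<in> occ_positions w (p @ [x, y] @ q)"
      and "i + length w \<le> j"
      using packing that unfolding occ_packing_def by blast+
    moreover have "length p < i + length w" "j < length p + 2"
      using that by auto
    moreover have "0 < length w"
      using \<open>w \<noteq> []\<close> by simp
    ultimately have ends: "i + (length w - 1) = length p" and starts: "j = Suc (length p)"
      by linarith+
    have "x = last w"
      using occ_positions_nth[OF occ(1), of "length w - 1"] ends \<open>w \<noteq> []\<close>
      by (simp add: last_conv_nth)
    moreover have "y = hd w"
      using occ_positions_nth[OF occ(2), of 0] starts \<open>w \<noteq> []\<close>
      by (simp add: hd_conv_nth nth_append)
    ultimately show False
      using not_junction by blast
  qed
  then have "i = j" if "i \<in> ?M" "j \<in> ?M" for i j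
    using that by (cases i j rule: linorder_cases) auto
  moreover have "finite ?M"
    using occ_packing_finite[OF packing] by (rule rev_finite_subset) blast
  ultimately show ?thesis
    unfolding One_nat_def by (subst card_le_Suc0_iff_eq) blast+
qed

lemma occ_count_replace_pair_le:
  assumes "w \<noteq> []" and "\<not> (x = last w \<and> y = hd w)"
  shows "occ_count w (p @ [x, y] @ q) \<le> Suc (occ_count w (p @ r @ q))"
proof -
  obtain P where packing: "occ_packing w (p @ [x, y] @ q) P"
    and card_P: "card P = occ_count w (p @ [x, y] @ q)"
    using occ_count_attained by blast
  define M where "M = {j\<in>P. \<not> (j + length w \<le> length p \<or> length p + 2 \<le> j)}"
  have "card (P - M) \<le> occ_count w (p @ r @ q)"
    using assms(1) occ_packing_subset[OF packing]
    by (rule card_occ_packing_avoiding_le) (auto simp: M_def)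
  moreover have "card M \<le> 1"
    unfolding M_def using assms(1) packing assms(2) by (rule card_occ_packing_meeting_pair_le)
  moreover have "card P \<le> card (P - M) + card M"
    using card_Un_le[of "P - M" M] by (simp add: Un_absorb2 M_def)
  ultimately show ?thesis
    using card_P by linarith
qed

lemma merge_length_minus_occ_count_le:
  assumes "w \<noteq> []" "alternating A B C (w @ w)" "shares_factor A B x y" "length r < 2"
  shows "length (p @ r @ q) - occ_count w (p @ r @ q) \<le>
    length (p @ [x, y] @ q) - occ_count w (p @ [x, y] @ q)"
proof -
  have "\<not> (x = last w \<and> y = hd w)"
    using assms(1-3) by (rule not_junction_if_shares_factor)
  then have "occ_count w (p @ [x, y] @ q) \<le> Suc (occ_count w (p @ r @ q))"
    using assms(1) by (intro occ_count_replace_pair_le)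
  then show ?thesis
    using assms(4) by simp
qed

lemma word_eval_Nil [simp]: "word_eval G [] = \<one>\<^bsub>G\<^esub>"
  by (simp add: word_eval_def)

lemma word_eval_Cons [simp]: "word_eval G (x # xs) = x \<otimes>\<^bsub>G\<^esub> word_eval G xs"
  by (simp add: word_eval_def)

context monoid
begin

lemma word_eval_closed [intro, simp]: "set xs \<subseteq> carrier G \<Longrightarrow> word_eval G xs \<in> carrier G"
  by (induction xs) auto

lemma word_eval_append:
  "set xs \<subseteq> carrier G \<Longrightarrow> set ys \<subseteq> carrier G \<Longrightarrow>
    word_eval G (xs @ ys) = word_eval G xs \<otimes> word_eval G ys"
  by (induction xs) (auto simp: m_assoc)

end

definition inv_word :: "('a, 'b) monoid_scheme \<Rightarrow> 'a list \<Rightarrow> 'a list" where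
  "inv_word G xs = rev (map (m_inv G) xs)"

lemma inv_word_eq_Nil_iff [simp]: "inv_word G xs = [] \<longleftrightarrow> xs = []"
  by (simp add: inv_word_def)

lemma (in group) word_eval_inv_word:
  "set xs \<subseteq> carrier G \<Longrightarrow> word_eval G (inv_word G xs) = inv (word_eval G xs)"
proof (induction xs)
  case (Cons a xs)
  moreover have "set (inv_word G xs) \<subseteq> carrier G"
    using Cons.prems by (auto simp: inv_word_def)
  ultimately show ?case
    by (simp add: inv_word_def word_eval_append inv_mult_group)
qed (simp add: inv_word_def)

lemma geodesicI:
  assumes "set u \<subseteq> S"
    and "\<And>v. set v \<subseteq> S \<Longrightarrow> word_eval G v = word_eval G u \<Longrightarrow> length u \<le> length v"
  shows "geodesic G S u"
  unfolding geodesic_def word_length_def using assms by (auto intro!: Least_equality[symmetric])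

locale amalgam =
  fixes G (structure) and A B C :: "'a set"
  assumes amalgamated_product: "amalgamated_product G A B C"

sublocale amalgam \<subseteq> group G
  using amalgamated_product by (simp add: amalgamated_product_def)

context amalgam
begin

abbreviation letters :: "'a set" where
  "letters \<equiv> (A \<union> B) - {\<one>}"

lemma subgroup_A: "subgroup A G" and subgroup_B: "subgroup B G" and A_Int_B: "A \<inter> B = C"
  and generate_A_Un_B: "generate G (A \<union> B) = carrier G"
  and alternating_eval_ne_one: "xs \<noteq> [] \<Longrightarrow> alternating A B C xs \<Longrightarrow> word_eval G xs \<noteq> \<one>"
  using amalgamated_product by (auto simp: amalgamated_product_def)

lemma A_subset_carrier: "A \<subseteq> carrier G" and B_subset_carrier: "B \<subseteq> carrier G"
  using subgroup_A subgroup_B by (simp_all add: subgroup.subset)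

lemma subgroup_C: "subgroup C G"
  using subgroups_Inter_pair[OF subgroup_A subgroup_B] A_Int_B by simp

lemma letter_type_mult_C:
  assumes "x \<in> carrier G" "c \<in> C"
  shows "letter_type A B C (x \<otimes> c) = letter_type A B C x"
proof -
  have "x \<otimes> c \<in> H \<longleftrightarrow> x \<in> H" if H: "subgroup H G" "C \<subseteq> H" for H
  proof
    have c: "c \<in> H" "c \<in> carrier G"
      using assms(2) H subgroup.subset by blast+
    assume "x \<otimes> c \<in> H"
    then have "x \<otimes> c \<otimes> inv c \<in> H"
      using H(1) c(1) by (simp add: subgroup.m_closed subgroup.m_inv_closed)
    then show "x \<in> H"
      using assms(1) c(2) by (simp add: m_assoc)
  next
    assume "x \<in> H"
    then show "x \<otimes> c \<in> H"
      using H assms(2) by (simp add: subgroup.m_closed subsetD)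
  qed
  moreover have "x \<otimes> c \<in> C \<longleftrightarrow> x \<in> C"
    using calculation[OF subgroup_C] by simp
  ultimately show ?thesis
    using subgroup_A subgroup_B A_Int_B by (auto simp: letter_type_def)
qed

lemma letter_type_inv:
  assumes "x \<in> carrier G"
  shows "letter_type A B C (inv x) = letter_type A B C x"
proof -
  have "inv x \<in> H \<longleftrightarrow> x \<in> H" if "subgroup H G" for H
    using assms that by (metis inv_inv subgroup.m_inv_closed)
  then show ?thesis
    using subgroup_A subgroup_B subgroup_C by (simp add: letter_type_def)
qed

lemma alternating_carrier: "alternating A B C xs \<Longrightarrow> set xs \<subseteq> carrier G"
  using A_subset_carrier B_subset_carrier by (auto simp: alternating_iff_successively)

lemma alternating_inv_word:
  assumes "alternating A B C xs"
  shows "alternating A B C (inv_word G xs)"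
proof -
  have "map (letter_type A B C) (map (m_inv G) xs) = map (letter_type A B C) xs"
    using alternating_carrier[OF assms] letter_type_inv by auto
  then show ?thesis
    using assms alternating_letter_type_cong unfolding inv_word_def by (metis alternating_rev)
qed

lemma alternating_snoc_mult_C:
  assumes "alternating A B C (xs @ [a])" "c \<in> C"
  shows "alternating A B C (xs @ [a \<otimes> c])"
proof -
  have "letter_type A B C (a \<otimes> c) = letter_type A B C a"
    using alternating_carrier[OF assms(1)] assms(2) by (simp add: letter_type_mult_C)
  then show ?thesis
    using assms(1) alternating_letter_type_cong[of A B C "xs @ [a \<otimes> c]" "xs @ [a]"] by simp
qed

lemma alternating_eval_in_C:
  assumes "alternating A B C xs" "word_eval G xs \<in> C"
  shows "xs = []"
proof (rule ccontr)
  assume "xs \<noteq> []"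
  then obtain ys a where xs: "xs = ys @ [a]"
    by (metis rev_exhaust)
  have carrier: "set ys \<subseteq> carrier G" "a \<in> carrier G"
    using alternating_carrier[OF assms(1)] xs by auto
  let ?c = "inv (word_eval G xs)"
  have "?c \<in> C"
    using assms(2) subgroup_C by (simp add: subgroup.m_inv_closed)
  then have "alternating A B C (ys @ [a \<otimes> ?c])"
    using assms(1) xs alternating_snoc_mult_C by blast
  moreover have "word_eval G (ys @ [a \<otimes> ?c]) = \<one>"
  proof -
    have "word_eval G xs = word_eval G ys \<otimes> a"
      using carrier by (simp add: xs word_eval_append)
    moreover have "?c \<in> carrier G"
      using alternating_carrier[OF assms(1)] by simp
    ultimately show ?thesis
      using carrier by (simp add: word_eval_append m_assoc[symmetric])
  qed
  ultimately show False
    using alternating_eval_ne_one by blast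
qed

lemma alternating_last_letters_not_alternating_pair:
  assumes xs: "alternating A B C (xs @ [a])" and ys: "alternating A B C (ys @ [b])"
    and eq: "word_eval G (xs @ [a]) = word_eval G (ys @ [b])"
  shows "\<not> alternating_pair A B C a b"
proof
  assume "alternating_pair A B C a b"
  moreover have "letter_type A B C (inv b) = letter_type A B C b"
    using alternating_carrier[OF ys] by (intro letter_type_inv) simp
  ultimately have "alternating_pair A B C a (inv b)"
    by (metis alternating_pair_letter_type_cong)
  let ?z = "(xs @ [a]) @ inv_word G (ys @ [b])"
  have inv_ys: "alternating A B C (inv_word G (ys @ [b]))"
    using ys by (rule alternating_inv_word)
  moreover have "hd (inv_word G (ys @ [b])) = inv b"
    by (simp add: inv_word_def)
  ultimately have "alternating A B C ?z"
    using xs \<open>alternating_pair A B C a (inv b)\<close> by (subst alternating_append) simp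
  moreover have "word_eval G ?z = \<one>"
  proof -
    have "word_eval G ?z = word_eval G (xs @ [a]) \<otimes> inv (word_eval G (ys @ [b]))"
      using alternating_carrier xs ys inv_ys by (simp only: word_eval_append word_eval_inv_word)
    also have "\<dots> = \<one>"
      using eq alternating_carrier[OF ys] by simp
    finally show ?thesis .
  qed
  ultimately show False
    using alternating_eval_ne_one by blast
qed

lemma alternating_last_letters_mod_C:
  assumes xs: "alternating A B C (xs @ [a])" and ys: "alternating A B C (ys @ [b])"
    and eq: "word_eval G (xs @ [a]) = word_eval G (ys @ [b])"
  shows "a \<otimes> inv b \<in> C"
proof (rule ccontr)
  assume not_C: "a \<otimes> inv b \<notin> C"
  obtain H where H: "H = A \<or> H = B" "a \<in> H - C" "b \<in> H - C"
    using alternating_last_letters_not_alternating_pair[OF assms]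
    by (auto simp: alternating_pair_def)
  have carrier: "set xs \<subseteq> carrier G" "a \<in> carrier G" "set ys \<subseteq> carrier G" "b \<in> carrier G"
    using alternating_carrier[OF xs] alternating_carrier[OF ys] by auto
  have "a \<otimes> inv b \<in> H - C"
    using H not_C subgroup_A subgroup_B by (auto simp: subgroup.m_closed subgroup.m_inv_closed)
  then have type_a: "letter_type A B C (a \<otimes> inv b) = letter_type A B C a"
    and type_b: "letter_type A B C (a \<otimes> inv b) = letter_type A B C b"
    using H A_Int_B letter_type_eq_if_same_factor by metis+
  let ?z = "(xs @ [a \<otimes> inv b]) @ inv_word G ys"
  have inv_ys: "alternating A B C (inv_word G ys)" "set (inv_word G ys) \<subseteq> carrier G"
    using ys alternating_inv_word alternating_carrier by (auto simp: alternating_append)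
  have "alternating A B C (xs @ [a \<otimes> inv b])"
    using xs type_a alternating_letter_type_cong[of A B C "xs @ [a \<otimes> inv b]" "xs @ [a]"]
    by simp
  moreover have "alternating_pair A B C (a \<otimes> inv b) (hd (inv_word G ys))" if "ys \<noteq> []"
  proof -
    have "alternating_pair A B C b (last ys)"
      using ys that by (simp add: alternating_append alternating_pair_commute)
    moreover have "hd (inv_word G ys) = inv (last ys)"
      using that by (simp add: inv_word_def hd_rev last_map)
    moreover have "letter_type A B C (inv (last ys)) = letter_type A B C (last ys)"
      using carrier(3) that by (intro letter_type_inv) auto
    ultimately show ?thesis
      using type_b by (metis alternating_pair_letter_type_cong)
  qed
  ultimately have "alternating A B C ?z"
    using inv_ys by (subst alternating_append) auto
  moreover have "word_eval G ?z = \<one>"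
  proof -
    have "word_eval G ?z = (word_eval G xs \<otimes> a) \<otimes> inv b \<otimes> inv (word_eval G ys)"
      using carrier inv_ys by (simp add: word_eval_append word_eval_inv_word m_assoc)
    also have "\<dots> = (word_eval G ys \<otimes> b) \<otimes> inv b \<otimes> inv (word_eval G ys)"
      using eq carrier by (simp add: word_eval_append)
    also have "\<dots> = \<one>"
      using carrier by (simp add: m_assoc)
    finally show ?thesis .
  qed
  ultimately show False
    using alternating_eval_ne_one by blast
qed

text \<open>Generalising over \<open>c \<in> C\<close> lets the induction absorb the \<open>C\<close>-quotient of the
  last letters into the preceding letter.\<close>

lemma alternating_length_eq:
  assumes "alternating A B C xs" "alternating A B C ys" "c \<in> C"
    and "word_eval G xs \<otimes> c = word_eval G ys"
  shows "length xs = length ys"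
  using assms
proof (induction xs arbitrary: ys c rule: rev_induct)
  case Nil
  then have "word_eval G ys \<in> C"
    using subgroup_C subgroup.subset by fastforce
  then show ?case
    using Nil alternating_eval_in_C by simp
next
  case (snoc a xs)
  have carrier: "set xs \<subseteq> carrier G" "a \<in> carrier G" "c \<in> carrier G"
    using alternating_carrier[OF snoc.prems(1)] snoc.prems(3) subgroup_C subgroup.subset by auto
  have absorbed: "alternating A B C (xs @ [a \<otimes> c])"
    using snoc.prems alternating_snoc_mult_C by blast
  have eval: "word_eval G (xs @ [a \<otimes> c]) = word_eval G ys"
    using snoc.prems(4) carrier by (simp add: word_eval_append m_assoc)
  have "ys \<noteq> []"
  proof
    assume "ys = []"
    then have "word_eval G (xs @ [a \<otimes> c]) \<in> C"
      using eval subgroup_C by (simp add: subgroup.one_closed)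
    then show False
      using alternating_eval_in_C[OF absorbed] by simp
  qed
  then obtain ys' b where ys: "ys = ys' @ [b]"
    by (metis rev_exhaust)
  have carrier_ys: "set ys' \<subseteq> carrier G" "b \<in> carrier G"
    using alternating_carrier[OF snoc.prems(2)] ys by auto
  have d: "a \<otimes> c \<otimes> inv b \<in> C"
    using alternating_last_letters_mod_C absorbed snoc.prems(2) eval ys by blast
  have "word_eval G xs \<otimes> (a \<otimes> c \<otimes> inv b) = word_eval G (xs @ [a \<otimes> c]) \<otimes> inv b"
    using carrier carrier_ys by (simp add: word_eval_append m_assoc)
  also have "\<dots> = word_eval G ys'"
    using carrier_ys by (simp add: eval ys word_eval_append m_assoc)
  finally have "length xs = length ys'"
    using snoc.IH snoc.prems(1,2) d ys by (simp add: alternating_append)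
  then show ?case
    using ys by simp
qed

lemma merge_shared_factor_pair:
  assumes "set (p @ [x, y] @ q) \<subseteq> letters" and "shares_factor A B x y"
  obtains r where "length r < 2" "set (p @ r @ q) \<subseteq> letters"
    "word_eval G (p @ r @ q) = word_eval G (p @ [x, y] @ q)"
proof -
  let ?r = "if x \<otimes> y = \<one> then [] else [x \<otimes> y]"
  have carrier: "set p \<subseteq> carrier G" "x \<in> carrier G" "y \<in> carrier G" "set q \<subseteq> carrier G"
    using assms(1) A_subset_carrier B_subset_carrier by auto
  have "x \<otimes> y \<in> A \<union> B"
    using assms(2) subgroup_A subgroup_B by (auto simp: shares_factor_def subgroup.m_closed)
  then have "set ?r \<subseteq> letters"
    by simp
  moreover have "set ?r \<subseteq> carrier G" "word_eval G ?r = word_eval G [x, y]"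
    using carrier by simp_all
  ultimately show ?thesis
    using assms(1) carrier by (intro that[of ?r]) (auto simp: word_eval_append m_assoc)
qed

lemma normal_form_shortening:
  assumes "set v \<subseteq> letters"
  shows "\<exists>u. set u \<subseteq> letters \<and> word_eval G u = word_eval G v \<and>
    (alternating A B C u \<or> length u \<le> 1) \<and> length u \<le> length v \<and>
    (\<forall>w. w \<noteq> [] \<and> alternating A B C (w @ w) \<longrightarrow>
       length u - occ_count w u \<le> length v - occ_count w v)"
  using assms
proof (induction "length v" arbitrary: v rule: less_induct)
  case less
  show ?case
  proof (cases "successively (\<lambda>x y. \<not> shares_factor A B x y) v")
    case True
    then have "alternating A B C v \<or> length v \<le> 1"
      using alternating_if_no_shared_factor[OF A_Int_B] less.prems by blast
    then show ?thesis
      using less.prems by blast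
  next
    case False
    then obtain p x y q where v: "v = p @ [x, y] @ q" and shares: "shares_factor A B x y"
      using not_successively_split by blast
    then obtain r where r: "length r < 2" "set (p @ r @ q) \<subseteq> letters"
      "word_eval G (p @ r @ q) = word_eval G v"
      using merge_shared_factor_pair less.prems by metis
    have shorter: "length (p @ r @ q) < length v"
      using r(1) v by simp
    have occ: "length (p @ r @ q) - occ_count w (p @ r @ q) \<le> length v - occ_count w v"
      if "w \<noteq> []" "alternating A B C (w @ w)" for w
      unfolding v using that shares r(1) by (rule merge_length_minus_occ_count_le)
    obtain u where u: "set u \<subseteq> letters" "word_eval G u = word_eval G (p @ r @ q)"
      "alternating A B C u \<or> length u \<le> 1" "length u \<le> length (p @ r @ q)"
      and u_occ: "\<forall>w. w \<noteq> [] \<and> alternating A B C (w @ w) \<longrightarrow>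
         length u - occ_count w u \<le> length (p @ r @ q) - occ_count w (p @ r @ q)"
      using less.hyps[OF shorter r(2)] by blast
    have "length u - occ_count w u \<le> length v - occ_count w v"
      if "w \<noteq> [] \<and> alternating A B C (w @ w)" for w
      using u_occ occ that by (meson order_trans)
    then show ?thesis
      using u r(3) shorter by (intro exI[of _ u]) auto
  qed
qed

lemma normal_words_length_eq:
  assumes u: "set u \<subseteq> letters" "alternating A B C u \<or> length u \<le> 1"
    and v: "set v \<subseteq> letters" "alternating A B C v \<or> length v \<le> 1"
    and eq: "word_eval G u = word_eval G v"
  shows "length u = length v"
proof -
  have single_letter: "length u' = 1 \<and> length v' = 1"
    if u': "set u' \<subseteq> letters" "\<not> alternating A B C u'" "length u' \<le> 1"
      and v': "alternating A B C v' \<or> length v' \<le> 1"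
      and eq': "word_eval G u' = word_eval G v'" for u' v'
  proof -
    obtain c where c: "u' = [c]"
      using u'(2,3) by (cases u') (auto simp: alternating_iff_successively)
    then have "c \<in> C" "c \<noteq> \<one>" "c \<in> carrier G"
      using u' A_subset_carrier B_subset_carrier by (auto simp: alternating_iff_successively)
    then have "word_eval G v' \<in> C" "v' \<noteq> []"
      using eq' c by auto
    then have "\<not> alternating A B C v'"
      using alternating_eval_in_C by blast
    then show ?thesis
      using v' c \<open>v' \<noteq> []\<close> by (cases v') auto
  qed
  show ?thesis
  proof (cases "alternating A B C u \<and> alternating A B C v")
    case True
    then show ?thesis
      using alternating_length_eq[of u v \<one>] eq alternating_carrier subgroup_C
      by (simp add: subgroup.one_closed)
  next
    case False
    then show ?thesis
      using single_letter[of u v] single_letter[of v u] u v eq by auto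
  qed
qed

lemma normal_word_geodesic:
  assumes "set u \<subseteq> letters" "alternating A B C u \<or> length u \<le> 1"
  shows "geodesic G letters u"
proof (rule geodesicI)
  fix v
  assume v: "set v \<subseteq> letters" "word_eval G v = word_eval G u"
  then obtain u' where "set u' \<subseteq> letters" "word_eval G u' = word_eval G u"
    "alternating A B C u' \<or> length u' \<le> 1" "length u' \<le> length v"
    using normal_form_shortening by metis
  then show "length u \<le> length v"
    using normal_words_length_eq assms by metis
qed (rule assms(1))

lemma word_over_letters_exists:
  assumes "g \<in> carrier G"
  shows "\<exists>v. set v \<subseteq> letters \<and> word_eval G v = g"
proof -
  have letter: "\<exists>v. set v \<subseteq> letters \<and> word_eval G v = h" if "h \<in> A \<union> B" for h
    using that A_subset_carrier B_subset_carrier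
    by (intro exI[of _ "if h = \<one> then [] else [h]"]) auto
  have "g \<in> generate G (A \<union> B)"
    using assms generate_A_Un_B by simp
  then show ?thesis
  proof (induction rule: generate.induct)
    case one
    show ?case
      by (intro exI[of _ "[]"]) simp
  next
    case (incl h)
    then show ?case
      by (rule letter)
  next
    case (inv h)
    then show ?case
      using subgroup_A subgroup_B letter by (auto simp: subgroup.m_inv_closed)
  next
    case (eng h1 h2)
    then obtain v1 v2 where v: "set v1 \<subseteq> letters" "word_eval G v1 = h1"
      "set v2 \<subseteq> letters" "word_eval G v2 = h2"
      by blast
    moreover have "set v1 \<subseteq> carrier G" "set v2 \<subseteq> carrier G"
      using v A_subset_carrier B_subset_carrier by blast+
    ultimately show ?case
      by (intro exI[of _ "v1 @ v2"]) (simp add: word_eval_append)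
  qed
qed

end

theorem lemma3p2:
  fixes G :: "('a, 'b) monoid_scheme" and A B C :: "'a set" and w :: "'a list" and g :: 'a
  assumes "amalgamated_product G A B C"
    and "C \<subset> A" and "C \<subset> B"
    and "w \<noteq> []" and "set w \<subseteq> (A \<union> B) - {\<one>\<^bsub>G\<^esub>}"
    and "reduced_word A B C (w @ w)"
    and "g \<in> carrier G"
  shows "\<exists>u. set u \<subseteq> (A \<union> B) - {\<one>\<^bsub>G\<^esub>} \<and> word_eval G u = g \<and>
             geodesic G ((A \<union> B) - {\<one>\<^bsub>G\<^esub>}) u \<and>
             (\<forall>v. set v \<subseteq> (A \<union> B) - {\<one>\<^bsub>G\<^esub>} \<and> word_eval G v = g \<longrightarrow>
                  length u - occ_count w u \<le> length v - occ_count w v)"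
proof -
  interpret amalgam G A B C
    by (rule amalgam.intro) (fact assms(1))
  have "length (w @ w) \<noteq> 1"
    by (cases w) auto
  then have ww: "alternating A B C (w @ w)"
    using assms(6) by (simp add: reduced_word_def)
  obtain v0 where "set v0 \<subseteq> letters" "word_eval G v0 = g"
    using word_over_letters_exists[OF assms(7)] by blast
  then obtain v where v: "set v \<subseteq> letters" "word_eval G v = g"
    and minimal: "\<And>v'. set v' \<subseteq> letters \<and> word_eval G v' = g \<Longrightarrow>
      length v - occ_count w v \<le> length v' - occ_count w v'"
    using ex_has_least_nat[of "\<lambda>v. set v \<subseteq> letters \<and> word_eval G v = g" v0
        "\<lambda>v. length v - occ_count w v"]
    by blast
  obtain u where u: "set u \<subseteq> letters" "word_eval G u = g" "alternating A B C u \<or> length u \<le> 1"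
    and u_occ: "\<forall>w. w \<noteq> [] \<and> alternating A B C (w @ w) \<longrightarrow>
       length u - occ_count w u \<le> length v - occ_count w v"
    using normal_form_shortening[OF v(1)] v(2) by blast
  have "length u - occ_count w u \<le> length v' - occ_count w v'"
    if "set v' \<subseteq> letters \<and> word_eval G v' = g" for v'
    using minimal[OF that] u_occ assms(4) ww by fastforce
  moreover have "geodesic G letters u"
    by (rule normal_word_geodesic[OF u(1,3)])
  ultimately show ?thesis
    using u by blast
qed

end
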